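(* Fix an integer base $b\ge 2$ and let $\mathcal{D}_b=\{0,1,\dots,b-1\}$. The constant \[ c_{\mathrm{dead}}(b):=\sum_{S\subseteq \mathcal{D}_b} (-1)^{|S|}\prod_{p\ \text{prime}}\left(1-\frac{\nu_{p,b}(S)}{p^2}\right) \] is well defined (each infinite product converges) and positive, and for every real $X\ge 3$, \[ D_b(X)=c_{\mathrm{dead}}(b)\,X+O_b\!\left(\frac{X}{\sqrt{\log X}}\right), \] where the implied constant depends only on $b$.
   Context: A positive integer is square-free if it is not divisible by any perfect square $>1$. A positive integer $N$ is a base-$b$ dead end if $N$ is square-free and for every digit $d\in\{0,1,\dots,b-1\}$ the integer $bN+d$ is not square-free. $D_b(X):=\#\{1\le N\le X: N\text{ is a base-}b\text{ dead end}\}$. For a prime $p$ and $S\subseteq\{0,\dots,b-1\}$, $\nu_{p,b}(S):=\#\{n\bmod p^2:\ p^2\mid n\text{ or } p^2\mid(bn+d)\text{ for some } d\in S\}$. *)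

theory Defs
  imports "HOL-Analysis.Analysis" "HOL-Computational_Algebra.Squarefree"
begin

definition dead_end :: "nat \<Rightarrow> nat \<Rightarrow> bool" where
  "dead_end b N \<longleftrightarrow> squarefree N \<and> (\<forall>d<b. \<not> squarefree (b * N + d))"

definition D_count :: "nat \<Rightarrow> real \<Rightarrow> nat" where
  "D_count b X = card {N::nat. 1 \<le> N \<and> real N \<le> X \<and> dead_end b N}"

definition nu :: "nat \<Rightarrow> nat \<Rightarrow> nat set \<Rightarrow> nat" where
  "nu p b S = card {n \<in> {..<p^2}. p^2 dvd n \<or> (\<exists>d\<in>S. p^2 dvd (b * n + d))}"

text \<open>Euler factor at p (factor 1 at non-primes, so the product runs over primes).\<close>
definition dead_factor :: "nat \<Rightarrow> nat set \<Rightarrow> nat \<Rightarrow> real" where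
  "dead_factor b S p = (if prime p then 1 - real (nu p b S) / real (p^2) else 1)"

definition c_dead :: "nat \<Rightarrow> real" where
  "c_dead b = (\<Sum>S\<in>Pow {..<b}. (-1) ^ card S * (\<Prod>p. dead_factor b S p))"

end

theory Submission
  imports Defs "HOL-Number_Theory.Cong" "HOL-Real_Asymp.Real_Asymp"
begin

(* Inclusion-exclusion over the set S of digits d for which b N + d is required to be squarefree
   writes D_b(X) as an alternating sum of the numbers of N <= X such that N and all b N + d (d in S)
   are squarefree.  Each of these is a sieve by residue classes modulo p^2.  For p <= z the count is
   exact up to one period prod p^2 <= z^(2z) by the Chinese remainder theorem; an N that is excluded
   only at some p > z has p^2 <= b N + b, so these primes remove O(X/z + sqrt X) further numbers.
   The choice z = sqrt (ln X) yields the error term X / sqrt (ln X).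
   For positivity, prescribe N = q (mod q^2) for a prime q dividing b, and b N + d = 0 (mod p_d^2)
   for distinct primes p_d > b, 1 <= d < b: the squarefree N in these classes are dead ends, and
   by the same sieve they have positive density. *)

section \<open>Counting in residue classes\<close>

lemma bij_betw_mod_pair:
  fixes m n :: nat
  assumes "coprime m n" "0 < m" "0 < n"
  shows "bij_betw (\<lambda>N. (N mod m, N mod n)) {..<m * n} ({..<m} \<times> {..<n})"
proof -
  have inj: "inj_on (\<lambda>N. (N mod m, N mod n)) {..<m * n}"
  proof (rule inj_onI)
    fix x y assume "x \<in> {..<m * n}" "y \<in> {..<m * n}" "(x mod m, x mod n) = (y mod m, y mod n)"
    then have "[x = y] (mod m)" "[x = y] (mod n)" "x < m * n" "y < m * n"
      by (auto simp: cong_def)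
    then show "x = y"
      using coprime_cong_mult_nat[OF _ _ assms(1)] cong_less_modulus_unique_nat by blast
  qed
  moreover have "(\<lambda>N. (N mod m, N mod n)) ` {..<m * n} = {..<m} \<times> {..<n}"
    using assms(2,3) card_image[OF inj]
    by (intro card_subset_eq) (auto simp: card_cartesian_product)
  ultimately show ?thesis by (simp add: bij_betw_def)
qed

lemma card_residue_conditions:
  fixes m :: "'a \<Rightarrow> nat" and G :: "'a \<Rightarrow> nat set"
  assumes "finite P" "pairwise (\<lambda>p q. coprime (m p) (m q)) P"
    and "\<And>p. p \<in> P \<Longrightarrow> 0 < m p" "\<And>p. p \<in> P \<Longrightarrow> G p \<subseteq> {..<m p}"
  shows "card {N \<in> {..<(\<Prod>p\<in>P. m p)}. \<forall>p\<in>P. N mod m p \<in> G p} = (\<Prod>p\<in>P. card (G p))"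
  using assms
proof (induction P rule: finite_induct)
  case empty
  then show ?case by simp
next
  case (insert q P)
  define n where "n = (\<Prod>p\<in>P. m p)"
  define h where "h = (\<lambda>N::nat. (N mod m q, N mod n))"
  define T where "T = {y \<in> {..<n}. \<forall>p\<in>P. y mod m p \<in> G p}"
  have "coprime (m q) n"
    unfolding n_def using insert.prems(1) insert.hyps(2)
    by (intro prod_coprime_right) (auto simp: pairwise_insert)
  then have bij: "bij_betw h {..<m q * n} ({..<m q} \<times> {..<n})"
    unfolding h_def n_def using insert.prems(2) by (intro bij_betw_mod_pair) (auto intro!: prod_pos)
  have mod_n: "(N mod n) mod m p = N mod m p" if "p \<in> P" for N p
    unfolding n_def using insert.hyps(1) that by (intro mod_mod_cancel dvd_prodI) auto
  define A where "A = {N \<in> {..<m q * n}. N mod m q \<in> G q \<and> (\<forall>p\<in>P. N mod m p \<in> G p)}"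
  have A_eq: "A = {N \<in> {..<m q * n}. h N \<in> G q \<times> T}"
    using bij unfolding A_def T_def h_def by (auto simp: mod_n bij_betw_def)
  have "h ` A = G q \<times> T"
  proof
    show "G q \<times> T \<subseteq> h ` A"
    proof
      fix u assume u: "u \<in> G q \<times> T"
      then have "u \<in> {..<m q} \<times> {..<n}"
        using insert.prems(3) unfolding T_def by auto
      then obtain N where "N < m q * n" "h N = u"
        using bij unfolding bij_betw_def by (metis imageE lessThan_iff)
      then show "u \<in> h ` A"
        using u unfolding A_eq by (intro image_eqI[of _ _ N]) auto
    qed
  qed (auto simp: A_eq)
  moreover have "inj_on h A"
    using bij unfolding A_eq bij_betw_def by (rule inj_on_subset[OF conjunct1]) auto
  ultimately have "bij_betw h A (G q \<times> T)"
    by (simp add: bij_betw_def)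
  then have "card A = card (G q) * card T"
    by (simp add: bij_betw_same_card card_cartesian_product)
  moreover have "card T = (\<Prod>p\<in>P. card (G p))"
    unfolding T_def n_def using insert by (auto simp: pairwise_insert)
  ultimately show ?case
    using insert.hyps unfolding A_def n_def by (simp add: conj_commute)
qed

lemma card_residue_class_le:
  fixes m :: nat
  assumes "0 < m"
  shows "real (card {N \<in> {1..M}. N mod m = r}) \<le> real M / real m + 1"
proof -
  have "inj_on (\<lambda>N. N div m) {N \<in> {1..M}. N mod m = r}"
  proof (rule inj_onI)
    fix x y
    assume "x \<in> {N \<in> {1..M}. N mod m = r}" "y \<in> {N \<in> {1..M}. N mod m = r}" "x div m = y div m"
    then have "x div m * m + x mod m = y div m * m + y mod m"
      by simp
    then show "x = y"
      by simp
  qed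
  moreover have "(\<lambda>N. N div m) ` {N \<in> {1..M}. N mod m = r} \<subseteq> {..M div m}"
    by (auto intro: div_le_mono)
  ultimately have "card {N \<in> {1..M}. N mod m = r} \<le> card {..M div m}"
    by (intro card_inj_on_le) auto
  then have "real (card {N \<in> {1..M}. N mod m = r}) \<le> real (M div m) + 1"
    by simp
  also have "real (M div m) \<le> real M / real m"
    by (rule of_nat_div_le_of_nat)
  finally show ?thesis
    by simp
qed

lemma sum_periodic_shift:
  fixes h :: "nat \<Rightarrow> 'a::cancel_comm_monoid_add"
  assumes "\<And>N. h (N + Q) = h N"
  shows "(\<Sum>i<Q. h (a + i)) = (\<Sum>i<Q. h i)"
proof (induction a)
  case (Suc a)
  have "h a + (\<Sum>i<Q. h (a + Suc i)) = (\<Sum>i<Q. h (a + i)) + h (a + Q)"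
    using sum.lessThan_Suc_shift[of "\<lambda>i. h (a + i)" Q] sum.lessThan_Suc[of "\<lambda>i. h (a + i)" Q]
    by simp
  then have "(\<Sum>i<Q. h (Suc a + i)) = (\<Sum>i<Q. h (a + i))"
    using assms[of a] by (simp add: add.commute)
  then show ?case
    using Suc.IH by simp
qed simp

lemma sum_periodic_deviation_le:
  fixes h :: "nat \<Rightarrow> real"
  assumes "0 < Q" "\<And>N. h (N + Q) = h N" "\<And>N. 0 \<le> h N" "\<And>N. h N \<le> 1"
  shows "\<bar>(\<Sum>N<M. h N) - real M * (\<Sum>N<Q. h N) / real Q\<bar> \<le> real Q"
proof (induction M rule: less_induct)
  case (less M)
  have sum_bounds: "0 \<le> (\<Sum>N<k. h N)" "(\<Sum>N<k. h N) \<le> real k" for k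
    using sum_mono[of "{..<k}" h "\<lambda>_. 1"] assms(3,4) by (auto intro: sum_nonneg)
  show ?case
  proof (cases "M < Q")
    case True
    have "real M * (\<Sum>N<Q. h N) / real Q \<le> real M"
      using sum_bounds(2)[of Q] assms(1) by (simp add: divide_le_eq mult_left_mono mult.commute)
    moreover have "0 \<le> real M * (\<Sum>N<Q. h N) / real Q"
      using sum_bounds(1)[of Q] by simp
    ultimately show ?thesis
      using sum_bounds[of M] True by (simp add: abs_le_iff)
  next
    case False
    then obtain a where M: "M = a + Q"
      using le_Suc_ex by (metis add.commute not_less)
    have "(\<Sum>N<a + k. h N) = (\<Sum>N<a. h N) + (\<Sum>i<k. h (a + i))" for k
      by (induction k) simp_all
    then have "(\<Sum>N<M. h N) = (\<Sum>N<a. h N) + (\<Sum>N<Q. h N)"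
      using sum_periodic_shift[of h Q a] assms(2) by (simp add: M)
    moreover have "real M * (\<Sum>N<Q. h N) / real Q = real a * (\<Sum>N<Q. h N) / real Q + (\<Sum>N<Q. h N)"
      using assms(1) by (simp add: M field_simps)
    ultimately show ?thesis
      using less.IH[of a] assms(1) M by simp
  qed
qed

lemma sum_inverse_squares_tail_le:
  assumes "1 \<le> z"
  shows "(\<Sum>n\<in>{z<..Y}. 1 / real n ^ 2) \<le> 1 / real z"
proof (cases "z \<le> Y")
  case True
  then have "(\<Sum>n\<in>{z<..Y}. 1 / real n ^ 2) \<le> 1 / real z - 1 / real Y"
  proof (induction Y rule: dec_induct)
    case (step Y)
    have Y: "1 \<le> real Y"
      using step.hyps assms by simp
    have "1 / real (Suc Y) ^ 2 \<le> 1 / (real Y * real (Suc Y))"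
      using Y by (intro divide_left_mono) (auto simp: power2_eq_square)
    also have "\<dots> = 1 / real Y - 1 / real (Suc Y)"
      using Y by (simp add: field_simps)
    finally have "1 / real (Suc Y) ^ 2 \<le> 1 / real Y - 1 / real (Suc Y)" .
    moreover have "{z<..Suc Y} = insert (Suc Y) {z<..Y}"
      using step.hyps by auto
    ultimately show ?case
      using step.IH by simp
  qed simp
  moreover have "0 \<le> 1 / real Y"
    by simp
  ultimately show ?thesis
    by linarith
qed simp

lemma one_minus_sum_le_prod_one_minus:
  fixes e :: "'a \<Rightarrow> real"
  assumes "finite A" "\<And>i. i \<in> A \<Longrightarrow> 0 \<le> e i \<and> e i \<le> 1"
  shows "1 - (\<Sum>i\<in>A. e i) \<le> (\<Prod>i\<in>A. 1 - e i)"
  using assms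
proof (induction A rule: finite_induct)
  case (insert x A)
  have "1 - (e x + (\<Sum>i\<in>A. e i)) \<le> (1 - e x) * (1 - (\<Sum>i\<in>A. e i))"
    using insert.prems by (simp add: algebra_simps sum_nonneg)
  also have "\<dots> \<le> (1 - e x) * (\<Prod>i\<in>A. 1 - e i)"
    using insert by (intro mult_left_mono) auto
  finally show ?case
    using insert.hyps by simp
qed simp

lemma sqrt_affine_le:
  fixes B D X :: real
  assumes "0 \<le> B" "0 \<le> D" "1 \<le> X"
  shows "sqrt (B * X + D) \<le> sqrt (B + D) * sqrt X"
proof -
  have "B * X + D \<le> (B + D) * X"
    using assms mult_left_mono[of 1 X D] by (simp add: algebra_simps)
  then show ?thesis
    by (simp flip: real_sqrt_mult)
qed

lemma bound_for_ge_3_if_eventually: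
  fixes g :: "real \<Rightarrow> real"
  assumes "\<And>X. 3 \<le> X \<Longrightarrow> \<bar>g X\<bar> \<le> A * X"
    and "eventually (\<lambda>X. \<bar>g X\<bar> \<le> C * (X / sqrt (ln X))) at_top"
  shows "\<exists>C. \<forall>X. 3 \<le> X \<longrightarrow> \<bar>g X\<bar> \<le> C * (X / sqrt (ln X))"
proof -
  obtain X0 where X0: "\<And>X. X0 \<le> X \<Longrightarrow> \<bar>g X\<bar> \<le> C * (X / sqrt (ln X))"
    using assms(2) by (auto simp: eventually_at_top_linorder)
  define C' where "C' = max C (\<bar>A\<bar> * sqrt (ln (max X0 3)))"
  show ?thesis
  proof (intro exI[of _ C'] allI impI)
    fix X :: real
    assume X: "3 \<le> X"
    then have pos: "0 < X / sqrt (ln X)"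
      by simp
    show "\<bar>g X\<bar> \<le> C' * (X / sqrt (ln X))"
    proof (cases "X0 \<le> X")
      case True
      have "\<bar>g X\<bar> \<le> C * (X / sqrt (ln X))"
        using X0[OF True] .
      also have "\<dots> \<le> C' * (X / sqrt (ln X))"
        using pos unfolding C'_def by (intro mult_right_mono) auto
      finally show ?thesis .
    next
      case False
      have "\<bar>g X\<bar> \<le> \<bar>A\<bar> * X"
        using assms(1)[OF X] mult_right_mono[OF abs_ge_self[of A], of X] X by linarith
      also have "\<dots> = \<bar>A\<bar> * sqrt (ln X) * (X / sqrt (ln X))"
        using X by simp
      also have "\<dots> \<le> C' * (X / sqrt (ln X))"
        using False X pos unfolding C'_def
        by (intro mult_right_mono) (auto intro!: mult_left_mono max.coboundedI2)
      finally show ?thesis .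
    qed
  qed
qed

lemma le_if_asymptotic_upper_and_lower_bound:
  fixes g :: "real \<Rightarrow> real"
  assumes "\<And>X. 3 \<le> X \<Longrightarrow> \<bar>g X - c * X\<bar> \<le> C * (X / sqrt (ln X))"
    and "\<And>X. 3 \<le> X \<Longrightarrow> P * X - C' * (X / sqrt (ln X)) \<le> g X"
  shows "P \<le> c"
proof -
  have "P - c \<le> (C + C') / sqrt (ln X)" if X: "3 \<le> X" for X
  proof -
    have "(P - c) * X \<le> C * (X / sqrt (ln X)) + C' * (X / sqrt (ln X))"
      using assms(1)[OF X] assms(2)[OF X] unfolding abs_le_iff left_diff_distrib by linarith
    also have "\<dots> = (C + C') / sqrt (ln X) * X"
      by (simp add: algebra_simps add_divide_distrib)
    finally show ?thesis
      using X by (simp del: times_divide_eq_left)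
  qed
  then have ev: "eventually (\<lambda>X. P - c \<le> (C + C') * (1 / sqrt (ln X))) at_top"
    by (intro eventually_at_top_linorderI[of 3]) simp
  have "((\<lambda>X. 1 / sqrt (ln X)) \<longlongrightarrow> 0) at_top"
    by real_asymp
  then have lim: "((\<lambda>X. (C + C') * (1 / sqrt (ln X))) \<longlongrightarrow> 0) at_top"
    by (rule tendsto_mult_right_zero)
  have "P - c \<le> 0"
    using tendsto_lowerbound[OF lim ev trivial_limit_at_top_linorder] .
  then show ?thesis
    by simp
qed

section \<open>Sieving by residue classes modulo squares of primes\<close>

(* An N excluded at a prime p > P0 satisfies p^2 <= B N + D, so only the primes up to
   sqrt (B X + D) take part in sieving the range N <= X. *)
locale square_residue_sieve =
  fixes G :: "nat \<Rightarrow> nat set" and K P0 B D :: nat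
  assumes residues_subset: "prime p \<Longrightarrow> G p \<subseteq> {..<p^2}"
    and card_excluded_le: "prime p \<Longrightarrow> P0 < p \<Longrightarrow> card ({..<p^2} - G p) \<le> K"
    and excluded_square_le:
      "prime p \<Longrightarrow> P0 < p \<Longrightarrow> 1 \<le> N \<Longrightarrow> N mod p^2 \<notin> G p \<Longrightarrow> p^2 \<le> B * N + D"
begin

definition density :: "nat \<Rightarrow> real" where
  "density p = (if prime p then real (card (G p)) / real (p^2) else 1)"

definition sifted :: "nat \<Rightarrow> bool" where
  "sifted N \<longleftrightarrow> (\<forall>p. prime p \<longrightarrow> N mod p^2 \<in> G p)"

definition sifted_upto :: "nat \<Rightarrow> nat \<Rightarrow> bool" where
  "sifted_upto z N \<longleftrightarrow> (\<forall>p. prime p \<and> p \<le> z \<longrightarrow> N mod p^2 \<in> G p)"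

definition sifted_count :: "real \<Rightarrow> nat" where
  "sifted_count X = card {N. 1 \<le> N \<and> real N \<le> X \<and> sifted N}"

definition sieve_modulus :: "nat \<Rightarrow> nat" where
  "sieve_modulus z = (\<Prod>p | prime p \<and> p \<le> z. p^2)"

lemma card_residues_le: "prime p \<Longrightarrow> card (G p) \<le> p^2"
  using card_mono[OF finite_lessThan residues_subset] by fastforce

lemma density_nonneg: "0 \<le> density p"
  by (simp add: density_def)

lemma density_le_1: "density p \<le> 1"
  using card_residues_le[of p] prime_gt_0_nat[of p]
  by (auto simp: density_def divide_le_eq_1 simp del: of_nat_power)

lemma one_minus_density_le:
  assumes "P0 < p"
  shows "1 - density p \<le> real K / real p ^ 2"
proof (cases "prime p")
  case True
  have "card ({..<p^2} - G p) = p^2 - card (G p)"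
    using card_Diff_subset[OF finite_subset[OF residues_subset[OF True]] residues_subset[OF True]]
    by simp
  then have "real (p^2 - card (G p)) \<le> real K"
    using card_excluded_le[OF True assms] by simp
  then have "real p ^ 2 - real (card (G p)) \<le> real K"
    by (simp add: of_nat_diff[OF card_residues_le[OF True]])
  moreover have "1 - density p = (real p ^ 2 - real (card (G p))) / real p ^ 2"
    using True prime_gt_0_nat[of p] by (simp add: density_def field_simps)
  ultimately show ?thesis
    by (simp add: divide_right_mono)
qed (simp add: density_def)

lemma convergent_prod_density: "convergent_prod density"
proof (rule abs_convergent_prod_imp_convergent_prod)
  show "abs_convergent_prod density"
    unfolding abs_convergent_prod_conv_summable
  proof (rule summable_comparison_test')
    show "summable (\<lambda>n. real K * inverse (real n ^ 2))"
      by (intro summable_mult inverse_power_summable) simp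
    fix n
    assume "Suc P0 \<le> n"
    then show "norm (norm (density n - 1)) \<le> real K * inverse (real n ^ 2)"
      using one_minus_density_le[of n] density_le_1[of n] by (simp add: field_simps)
  qed
qed

lemma prod_density_split:
  assumes "z \<le> w"
  shows "(\<Prod>i\<le>w. density i) = (\<Prod>i\<le>z. density i) * (\<Prod>i\<in>{z<..w}. density i)"
proof -
  have "{..w} = {..z} \<union> {z<..w}"
    using assms by auto
  then show ?thesis
    by (simp add: prod.union_disjoint ivl_disj_int)
qed

lemma prod_density_tail_ge:
  assumes "max P0 1 \<le> z"
  shows "1 - real K / real z \<le> (\<Prod>i\<in>{z<..w}. density i)"
proof -
  have "(\<Sum>i\<in>{z<..w}. 1 - density i) \<le> (\<Sum>i\<in>{z<..w}. real K * (1 / real i ^ 2))"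
    using assms one_minus_density_le by (intro sum_mono) auto
  also have "\<dots> \<le> real K / real z"
    using sum_inverse_squares_tail_le[of z w] assms
    by (simp add: sum_distrib_left[symmetric] mult_left_mono divide_inverse)
  finally have "1 - real K / real z \<le> 1 - (\<Sum>i\<in>{z<..w}. 1 - density i)"
    by simp
  also have "\<dots> \<le> (\<Prod>i\<in>{z<..w}. 1 - (1 - density i))"
    using density_nonneg density_le_1 by (intro one_minus_sum_le_prod_one_minus) auto
  finally show ?thesis
    by simp
qed

lemma LIMSEQ_prod_density: "(\<lambda>z. \<Prod>i\<le>z. density i) \<longlonglongrightarrow> prodinf density"
  using convergent_prod_LIMSEQ[OF convergent_prod_density] .

lemma prodinf_density_nonneg: "0 \<le> prodinf density"
  using LIMSEQ_prod_density by (rule LIMSEQ_le_const) (auto intro: prod_nonneg density_nonneg)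

lemma prodinf_density_le_1: "prodinf density \<le> 1"
  using LIMSEQ_prod_density by (rule LIMSEQ_le_const2) (auto intro: prod_le_1 density_nonneg density_le_1)

lemma abs_prodinf_density_minus_prod_le:
  assumes "max P0 1 \<le> z"
  shows "\<bar>prodinf density - (\<Prod>i\<le>z. density i)\<bar> \<le> real K / real z"
proof -
  define F where "F = (\<Prod>i\<le>z. density i)"
  have F: "0 \<le> F" "F \<le> 1"
    unfolding F_def by (auto intro: prod_nonneg prod_le_1 density_nonneg density_le_1)
  have "F * (1 - real K / real z) \<le> prodinf density"
    using LIMSEQ_prod_density
  proof (rule LIMSEQ_le_const, intro exI allI impI)
    fix w
    assume "z \<le> w"
    then show "F * (1 - real K / real z) \<le> (\<Prod>i\<le>w. density i)"
      using prod_density_split prod_density_tail_ge[OF assms, of w] F(1)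
      unfolding F_def by (simp add: mult_left_mono)
  qed
  moreover have "prodinf density \<le> F"
    using LIMSEQ_prod_density
  proof (rule LIMSEQ_le_const2, intro exI allI impI)
    fix w
    assume "z \<le> w"
    have "(\<Prod>i\<in>{z<..w}. density i) \<le> 1"
      by (auto intro: prod_le_1 density_nonneg density_le_1)
    then show "(\<Prod>i\<le>w. density i) \<le> F"
      using prod_density_split[OF \<open>z \<le> w\<close>] F(1) unfolding F_def by (simp add: mult_left_le)
  qed
  moreover have "F * (real K / real z) \<le> real K / real z"
    using mult_right_mono[OF F(2), of "real K / real z"] by simp
  ultimately show ?thesis
    unfolding F_def[symmetric] by (simp add: algebra_simps abs_le_iff)
qed

lemma prodinf_density_pos:
  assumes "\<And>p. prime p \<Longrightarrow> G p \<noteq> {}"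
  shows "0 < prodinf density"
proof -
  have "density p \<noteq> 0" for p
    using assms[of p] finite_subset[OF residues_subset[of p]] prime_gt_0_nat[of p]
    by (auto simp: density_def)
  then have "prodinf density \<noteq> 0"
    by (rule prodinf_nonzero[OF convergent_prod_density])
  then show ?thesis
    using prodinf_density_nonneg by linarith
qed

lemma prod_density_eq:
  "(\<Prod>i\<le>z. density i) = real (\<Prod>p | prime p \<and> p \<le> z. card (G p)) / real (sieve_modulus z)"
proof -
  have "(\<Prod>i\<le>z. density i) = (\<Prod>p | prime p \<and> p \<le> z. density p)"
    by (rule prod.mono_neutral_right) (auto simp: density_def)
  also have "\<dots> = (\<Prod>p | prime p \<and> p \<le> z. real (card (G p)) / real (p^2))"
    by (rule prod.cong) (auto simp: density_def)
  finally show ?thesis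
    by (simp add: sieve_modulus_def prod_dividef del: of_nat_power)
qed

lemma sieve_modulus_pos: "0 < sieve_modulus z"
  unfolding sieve_modulus_def using prime_gt_0_nat by (auto intro!: prod_pos)

lemma sieve_modulus_le:
  assumes "1 \<le> z"
  shows "real (sieve_modulus z) \<le> real z ^ (2 * z)"
proof -
  have "card {p. prime p \<and> p \<le> z} \<le> card {1..z}"
    using prime_ge_1_nat by (intro card_mono) auto
  then have "real (sieve_modulus z) \<le> (real z ^ 2) ^ z"
    unfolding sieve_modulus_def of_nat_prod
    using assms by (intro prod_le_power) (auto intro: power_mono)
  then show ?thesis
    by (simp add: power_mult)
qed

lemma sifted_upto_add_modulus: "sifted_upto z (N + sieve_modulus z) = sifted_upto z N"
proof -
  have "p^2 dvd sieve_modulus z" if "prime p" "p \<le> z" for p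
    unfolding sieve_modulus_def using that by (intro dvd_prodI) auto
  then show ?thesis
    unfolding sifted_upto_def by (auto simp: mod_add_right_eq[symmetric] dvd_eq_mod_eq_0)
qed

lemma card_sifted_upto_period:
  "card {N \<in> {..<sieve_modulus z}. sifted_upto z N} = (\<Prod>p | prime p \<and> p \<le> z. card (G p))"
proof -
  have "pairwise (\<lambda>p q. coprime (p^2) (q^2)) {p. prime p \<and> p \<le> z}"
    by (auto simp: pairwise_def primes_coprime)
  then show ?thesis
    unfolding sieve_modulus_def sifted_upto_def
    using card_residue_conditions[of "{p. prime p \<and> p \<le> z}" "\<lambda>p. p^2" G] residues_subset
    by (auto simp: prime_gt_0_nat)
qed

lemma sifted_upto_count_deviation_le:
  "\<bar>real (card {N \<in> {1..M}. sifted_upto z N}) - real M * (\<Prod>i\<le>z. density i)\<bar>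
     \<le> real (sieve_modulus z) + 1"
proof -
  define h where "h N = (if sifted_upto z N then 1 else 0 :: real)" for N
  define c where "c = card {N \<in> {1..M}. sifted_upto z N}"
  define s where "s = card {N \<in> {..<Suc M}. sifted_upto z N}"
  have sum_h: "(\<Sum>N<k. h N) = real (card {N \<in> {..<k}. sifted_upto z N})" for k
    unfolding h_def by (simp add: sum.inter_filter[symmetric])
  have "\<bar>(\<Sum>N<Suc M. h N) - real (Suc M) * (\<Sum>N<sieve_modulus z. h N) / real (sieve_modulus z)\<bar>
      \<le> real (sieve_modulus z)"
    using sieve_modulus_pos sifted_upto_add_modulus
    by (intro sum_periodic_deviation_le) (auto simp: h_def)
  then have dev: "\<bar>real s - real (Suc M) * (\<Prod>i\<le>z. density i)\<bar> \<le> real (sieve_modulus z)"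
    unfolding sum_h card_sifted_upto_period prod_density_eq s_def by simp
  have "c \<le> s"
    unfolding c_def s_def by (rule card_mono) auto
  moreover have "s \<le> c + 1"
  proof -
    have "s \<le> card (insert 0 {N \<in> {1..M}. sifted_upto z N})"
      unfolding s_def by (rule card_mono) auto
    then show ?thesis
      unfolding c_def by (simp add: card_insert_if)
  qed
  moreover have "0 \<le> (\<Prod>i\<le>z. density i)" "(\<Prod>i\<le>z. density i) \<le> 1"
    by (auto intro: prod_nonneg prod_le_1 density_nonneg density_le_1)
  ultimately show ?thesis
    using dev unfolding c_def[symmetric] by (simp add: abs_le_iff algebra_simps)
qed

lemma excluded_prime_le_sqrt:
  assumes "prime p" "P0 < p" "1 \<le> N" "N \<le> M" "N mod p^2 \<notin> G p"
  shows "p \<le> nat \<lfloor>sqrt (real (B * M + D))\<rfloor>"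
proof -
  have "p^2 \<le> B * N + D"
    using assms by (intro excluded_square_le) auto
  also have "\<dots> \<le> B * M + D"
    using assms(4) by simp
  finally have "real p \<le> sqrt (real (B * M + D))"
    by (intro real_le_rsqrt) (simp only: of_nat_power[symmetric] of_nat_le_iff)
  then show ?thesis
    by (rule le_nat_floor)
qed

lemma card_excluded_upto_le:
  assumes "prime p" "P0 < p"
  shows "real (card {N \<in> {1..M}. N mod p^2 \<notin> G p}) \<le> real K * (real M / real p ^ 2 + 1)"
proof -
  have p2: "0 < p^2"
    using assms(1) prime_gt_0_nat by simp
  have "{N \<in> {1..M}. N mod p^2 \<notin> G p} = (\<Union>r\<in>{..<p^2} - G p. {N \<in> {1..M}. N mod p^2 = r})"
    using p2 by auto
  then have "card {N \<in> {1..M}. N mod p^2 \<notin> G p} \<le> (\<Sum>r\<in>{..<p^2} - G p. card {N \<in> {1..M}. N mod p^2 = r})"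
    by (simp add: card_UN_le)
  then have "real (card {N \<in> {1..M}. N mod p^2 \<notin> G p})
      \<le> (\<Sum>r\<in>{..<p^2} - G p. real (card {N \<in> {1..M}. N mod p^2 = r}))"
    unfolding of_nat_sum[symmetric] of_nat_le_iff .
  also have "\<dots> \<le> (\<Sum>r\<in>{..<p^2} - G p. real M / real p ^ 2 + 1)"
    using card_residue_class_le[OF p2] by (intro sum_mono) simp
  also have "\<dots> = real (card ({..<p^2} - G p)) * (real M / real p ^ 2 + 1)"
    by simp
  also have "\<dots> \<le> real K * (real M / real p ^ 2 + 1)"
    using card_excluded_le[OF assms] by (intro mult_right_mono) auto
  finally show ?thesis .
qed

lemma card_sifted_upto_minus_sifted_le:
  assumes "max P0 1 \<le> z"
  shows "real (card {N \<in> {1..M}. sifted_upto z N}) - real (card {N \<in> {1..M}. sifted N})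
     \<le> real K * real M / real z + real K * sqrt (real (B * M + D))"
proof -
  define A where "A = {N \<in> {1..M}. sifted_upto z N}"
  define A' where "A' = {N \<in> {1..M}. sifted N}"
  define Y where "Y = nat \<lfloor>sqrt (real (B * M + D))\<rfloor>"
  define E where "E p = {N \<in> {1..M}. N mod p^2 \<notin> G p}" for p
  have cover: "A - A' \<subseteq> (\<Union>p\<in>{p. prime p \<and> z < p \<and> p \<le> Y}. E p)"
  proof
    fix N
    assume N: "N \<in> A - A'"
    then obtain p where p: "prime p" "N mod p^2 \<notin> G p" "1 \<le> N" "N \<le> M"
      unfolding A_def A'_def sifted_def by auto
    then have "z < p"
      using N unfolding A_def sifted_upto_def by (auto simp: not_le)
    then have "p \<le> Y"
      using assms p unfolding Y_def by (intro excluded_prime_le_sqrt) auto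
    then show "N \<in> (\<Union>p\<in>{p. prime p \<and> z < p \<and> p \<le> Y}. E p)"
      using p \<open>z < p\<close> unfolding E_def by auto
  qed
  have "A' \<subseteq> A"
    unfolding A_def A'_def sifted_def sifted_upto_def by auto
  then have "real (card A) - real (card A') = real (card (A - A'))"
    by (simp add: card_Diff_subset card_mono finite_subset[of _ A] of_nat_diff A_def)
  also have "\<dots> \<le> (\<Sum>p | prime p \<and> z < p \<and> p \<le> Y. real (card (E p)))"
  proof -
    have "card (A - A') \<le> card (\<Union>p\<in>{p. prime p \<and> z < p \<and> p \<le> Y}. E p)"
      using cover by (intro card_mono) (auto simp: E_def)
    also have "\<dots> \<le> (\<Sum>p | prime p \<and> z < p \<and> p \<le> Y. card (E p))"
      by (rule card_UN_le) auto
    finally show ?thesis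
      unfolding of_nat_sum[symmetric] of_nat_le_iff .
  qed
  also have "\<dots> \<le> (\<Sum>p | prime p \<and> z < p \<and> p \<le> Y. real K * (real M / real p ^ 2 + 1))"
  proof (rule sum_mono)
    fix p
    assume "p \<in> {p. prime p \<and> z < p \<and> p \<le> Y}"
    then show "real (card (E p)) \<le> real K * (real M / real p ^ 2 + 1)"
      using assms unfolding E_def by (intro card_excluded_upto_le) auto
  qed
  also have "\<dots> \<le> (\<Sum>p\<in>{z<..Y}. real K * (real M / real p ^ 2 + 1))"
    by (rule sum_mono2) auto
  also have "\<dots> = real K * real M * (\<Sum>p\<in>{z<..Y}. 1 / real p ^ 2) + real K * real (card {z<..Y})"
    by (simp add: ring_distribs sum.distrib sum_distrib_left)
  also have "\<dots> \<le> real K * real M * (1 / real z) + real K * sqrt (real (B * M + D))"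
  proof (intro add_mono mult_left_mono)
    show "(\<Sum>p\<in>{z<..Y}. 1 / real p ^ 2) \<le> 1 / real z"
      using assms by (intro sum_inverse_squares_tail_le) auto
    have "real (card {z<..Y}) \<le> real Y"
      by simp
    also have "\<dots> \<le> sqrt (real (B * M + D))"
      unfolding Y_def by (rule of_nat_floor) simp
    finally show "real (card {z<..Y}) \<le> sqrt (real (B * M + D))" .
  qed auto
  finally show ?thesis
    unfolding A_def A'_def by simp
qed

lemma sifted_count_eq:
  assumes "0 \<le> X"
  shows "sifted_count X = card {N \<in> {1..nat \<lfloor>X\<rfloor>}. sifted N}"
proof -
  have "real N \<le> X \<longleftrightarrow> N \<le> nat \<lfloor>X\<rfloor>" for N
    using le_nat_floor[of N X] of_nat_floor[OF assms] by (auto intro: order_trans[of _ "real (nat \<lfloor>X\<rfloor>)"])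
  then show ?thesis
    unfolding sifted_count_def by (intro arg_cong[where f = card]) auto
qed

lemma sifted_count_le:
  assumes "0 \<le> X"
  shows "real (sifted_count X) \<le> X"
proof -
  have "sifted_count X \<le> card {1..nat \<lfloor>X\<rfloor>}"
    unfolding sifted_count_eq[OF assms] by (rule card_mono) auto
  then have "real (sifted_count X) \<le> real (nat \<lfloor>X\<rfloor>)"
    by simp
  also have "\<dots> \<le> X"
    using assms by (rule of_nat_floor)
  finally show ?thesis .
qed

lemma sifted_count_error_le:
  assumes X: "1 \<le> X" and z: "max P0 1 \<le> z"
  shows "\<bar>real (sifted_count X) - prodinf density * X\<bar>
    \<le> 2 + real (sieve_modulus z) + 2 * real K * X / real z + real K * sqrt (real B * X + real D)"
proof -
  define M where "M = nat \<lfloor>X\<rfloor>"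
  define F where "F = (\<Prod>i\<le>z. density i)"
  define c where "c = card {N \<in> {1..M}. sifted N}"
  define cz where "cz = card {N \<in> {1..M}. sifted_upto z N}"
  define a where "a = real K * X / real z"
  have M: "real M \<le> X" "X < real M + 1"
    unfolding M_def using X by (simp_all add: of_nat_floor)
  have F: "0 \<le> F" "F \<le> 1"
    unfolding F_def by (auto intro: prod_nonneg prod_le_1 density_nonneg density_le_1)
  have "c \<le> cz"
    unfolding c_def cz_def sifted_def sifted_upto_def by (rule card_mono) auto
  then have "real c \<le> real cz"
    by simp
  moreover have "real cz - real c \<le> a + real K * sqrt (real B * X + real D)"
  proof -
    have "real K * real M / real z \<le> real K * X / real z"
      using M by (intro divide_right_mono mult_left_mono) auto
    moreover have "real K * sqrt (real (B * M + D)) \<le> real K * sqrt (real B * X + real D)"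
      using M by (intro mult_left_mono) (auto intro: mult_left_mono)
    ultimately show ?thesis
      using card_sifted_upto_minus_sifted_le[OF z, of M] unfolding c_def cz_def a_def by linarith
  qed
  moreover have "\<bar>real cz - real M * F\<bar> \<le> real (sieve_modulus z) + 1"
    unfolding cz_def F_def by (rule sifted_upto_count_deviation_le)
  moreover have "\<bar>real M * F - X * F\<bar> \<le> 1"
    using M F mult_left_mono[OF M(1) F(1)] mult_left_mono[of X "real M + 1" F]
    by (simp add: abs_le_iff algebra_simps)
  moreover have "\<bar>X * F - X * prodinf density\<bar> \<le> a"
  proof -
    have "\<bar>X * F - X * prodinf density\<bar> = X * \<bar>prodinf density - F\<bar>"
      using X by (simp add: abs_mult abs_minus_commute flip: right_diff_distrib)
    also have "\<dots> \<le> X * (real K / real z)"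
      using abs_prodinf_density_minus_prod_le[OF z] X unfolding F_def by (intro mult_left_mono) auto
    finally show ?thesis
      by (simp add: a_def mult.commute)
  qed
  moreover have "real (sifted_count X) = real c"
    unfolding sifted_count_eq[OF order_trans[OF zero_le_one X]] c_def M_def ..
  moreover have "prodinf density * X = X * prodinf density"
    by simp
  moreover have two_a: "2 * real K * X / real z = 2 * a"
    by (simp add: a_def)
  ultimately show ?thesis
    unfolding abs_le_iff two_a by linarith
qed

lemma sieve_modulus_le_exp:
  assumes "1 \<le> sqrt (ln X)"
  shows "real (sieve_modulus (nat \<lfloor>sqrt (ln X)\<rfloor>)) \<le> exp (sqrt (ln X) * ln (ln X))"
proof -
  define s where "s = sqrt (ln X)"
  define z where "z = nat \<lfloor>s\<rfloor>"
  have z: "1 \<le> z" "real z \<le> s"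
    using assms unfolding z_def s_def by (auto simp: le_nat_floor of_nat_floor)
  have "real (sieve_modulus z) \<le> real z ^ (2 * z)"
    using z(1) by (rule sieve_modulus_le)
  also have "\<dots> = exp (2 * real z * ln (real z))"
    using z(1) by (simp add: powr_realpow[symmetric] powr_def)
  also have "\<dots> \<le> exp (2 * s * ln s)"
    using z by (simp add: mult_mono)
  also have "2 * s * ln s = s * ln (ln X)"
    using assms by (simp add: s_def ln_sqrt)
  finally show ?thesis
    unfolding z_def s_def .
qed

lemma sifted_count_error_le_sqrt_ln:
  assumes X: "3 \<le> X" and s: "real P0 + 2 \<le> sqrt (ln X)"
    and modulus: "exp (sqrt (ln X) * ln (ln X)) \<le> X / sqrt (ln X)"
    and sqrt_X: "sqrt X \<le> X / sqrt (ln X)" and two: "2 \<le> X / sqrt (ln X)"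
  shows "\<bar>real (sifted_count X) - prodinf density * X\<bar>
    \<le> (2 + 4 * real K + real K * sqrt (real B + real D)) * (X / sqrt (ln X))"
proof -
  define s where "s = sqrt (ln X)"
  define z where "z = nat \<lfloor>s\<rfloor>"
  have s_ge: "2 \<le> s"
    using s of_nat_0_le_iff[of P0] unfolding s_def by linarith
  have z: "max P0 1 \<le> z" "s / 2 \<le> real z"
    using s unfolding z_def s_def by linarith+
  have "1 \<le> sqrt (ln X)"
    using s_ge unfolding s_def by linarith
  then have "real (sieve_modulus z) \<le> X / s"
    using sieve_modulus_le_exp[of X] modulus unfolding z_def s_def by simp
  moreover have "2 * real K * X / real z \<le> 4 * real K * (X / s)"
  proof -
    have "X / real z \<le> X / (s / 2)"
      using z s_ge X by (intro divide_left_mono) auto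
    then have "2 * real K * (X / real z) \<le> 2 * real K * (2 * (X / s))"
      by (intro mult_left_mono) (auto simp: mult.commute)
    then show ?thesis
      by simp
  qed
  moreover have "real K * sqrt (real B * X + real D) \<le> real K * sqrt (real B + real D) * (X / s)"
  proof -
    have "sqrt (real B * X + real D) \<le> sqrt (real B + real D) * sqrt X"
      using X by (intro sqrt_affine_le) auto
    also have "\<dots> \<le> sqrt (real B + real D) * (X / s)"
      using sqrt_X by (intro mult_left_mono) (simp_all add: s_def)
    finally show ?thesis
      unfolding mult.assoc by (rule mult_left_mono) simp
  qed
  ultimately have "\<bar>real (sifted_count X) - prodinf density * X\<bar>
      \<le> 2 + X / s + 4 * real K * (X / s) + real K * sqrt (real B + real D) * (X / s)"
    using sifted_count_error_le[of X z] X z by simp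
  also have "\<dots> \<le> (2 + 4 * real K + real K * sqrt (real B + real D)) * (X / s)"
    using two unfolding distrib_right s_def by linarith
  finally show ?thesis
    unfolding s_def .
qed

lemma sifted_count_error_eventually_le:
  "eventually (\<lambda>X. \<bar>real (sifted_count X) - prodinf density * X\<bar>
     \<le> (2 + 4 * real K + real K * sqrt (real B + real D)) * (X / sqrt (ln X))) at_top"
proof -
  have "eventually (\<lambda>X. 3 \<le> X \<and> real P0 + 2 \<le> sqrt (ln X)
      \<and> exp (sqrt (ln X) * ln (ln X)) \<le> X / sqrt (ln X)
      \<and> sqrt X \<le> X / sqrt (ln X) \<and> 2 \<le> X / sqrt (ln X)) at_top"
    by (intro eventually_conj; real_asymp)
  then show ?thesis
    by (rule eventually_mono) (blast intro: sifted_count_error_le_sqrt_ln)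
qed

theorem sifted_count_asymptotic:
  "\<exists>C. \<forall>X. 3 \<le> X \<longrightarrow> \<bar>real (sifted_count X) - prodinf density * X\<bar> \<le> C * (X / sqrt (ln X))"
proof (rule bound_for_ge_3_if_eventually[OF _ sifted_count_error_eventually_le])
  fix X :: real
  assume "3 \<le> X"
  then have X: "0 \<le> X"
    by simp
  show "\<bar>real (sifted_count X) - prodinf density * X\<bar> \<le> 2 * X"
    using sifted_count_le[OF X] mult_left_le_one_le[OF X prodinf_density_nonneg prodinf_density_le_1]
      mult_nonneg_nonneg[OF prodinf_density_nonneg X]
    by (simp add: abs_le_iff)
qed

end

section \<open>Squarefree values of N and b N + d\<close>

lemma dvd_mult_mod_add_iff:
  fixes m b N d :: nat
  shows "m dvd b * (N mod m) + d \<longleftrightarrow> m dvd b * N + d"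
proof -
  have "(b * (N mod m) + d) mod m = (b * N + d) mod m"
    by (metis mod_add_left_eq mod_mult_right_eq)
  then show ?thesis
    by (simp add: dvd_eq_mod_eq_0)
qed

lemma coprime_prime_power_if_less:
  fixes p b :: nat
  assumes "prime p" "0 < b" "b < p"
  shows "coprime b (p ^ k)"
proof -
  have "\<not> p dvd b"
    using assms by (auto dest: dvd_imp_le)
  then have "coprime b p"
    using prime_imp_coprime[OF assms(1)] by (simp add: coprime_commute)
  then show ?thesis
    by simp
qed

lemma linear_congruence_root_unique:
  fixes b m x y d :: nat
  assumes "coprime b m" "x < m" "y < m" "m dvd b * x + d" "m dvd b * y + d"
  shows "x = y"
proof -
  have "[b * x + d = b * y + d] (mod m)"
    using assms(4,5) by (simp add: cong_def dvd_eq_mod_eq_0)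
  then have "[x = y] (mod m)"
    using assms(1) by (simp add: cong_add_rcancel_nat cong_mult_lcancel_nat)
  then show ?thesis
    using assms(2,3) by (simp add: cong_def)
qed

lemma linear_congruence_root_exists:
  fixes b m d :: nat
  assumes "coprime b m" "0 < m"
  shows "\<exists>r<m. m dvd b * r + d"
proof -
  obtain x where "[b * x = (m - 1) * d] (mod m)"
    using cong_solve_dvd_nat[of b m "(m - 1) * d"] assms(1) by auto
  then have "[b * x + d = (m - 1) * d + d] (mod m)"
    by (rule cong_add) simp
  moreover have "(m - 1) * d + d = m * d"
    using assms(2) by (simp add: algebra_simps)
  ultimately have "m dvd b * x + d"
    by (simp add: cong_0_iff[symmetric] cong_def)
  then show ?thesis
    using assms(2) by (intro exI[of _ "x mod m"]) (simp add: dvd_mult_mod_add_iff)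
qed

definition allowed_residues :: "nat \<Rightarrow> nat set \<Rightarrow> nat \<Rightarrow> nat set" where
  "allowed_residues b S p = {n \<in> {..<p^2}. \<not> p^2 dvd n \<and> (\<forall>d\<in>S. \<not> p^2 dvd b * n + d)}"

definition squarefree_count :: "nat \<Rightarrow> nat set \<Rightarrow> real \<Rightarrow> nat" where
  "squarefree_count b S X =
     card {N. 1 \<le> N \<and> real N \<le> X \<and> squarefree N \<and> (\<forall>d\<in>S. squarefree (b * N + d))}"

lemma square_residue_sieve_allowed_residues:
  assumes b: "2 \<le> b" and S: "S \<subseteq> {..<b}"
  shows "square_residue_sieve (allowed_residues b S) (b + 1) b b b"
proof
  fix p :: nat
  assume "prime p"
  then show "allowed_residues b S p \<subseteq> {..<p^2}"
    unfolding allowed_residues_def by auto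
next
  fix p :: nat
  assume p: "prime p" "b < p"
  define U where "U d = {n \<in> {..<p^2}. p^2 dvd b * n + d}" for d
  have cop: "coprime b (p^2)"
    using b p by (intro coprime_prime_power_if_less) auto
  have U_le_1: "card (U d) \<le> 1" for d
  proof -
    have "x = y" if "x \<in> U d" "y \<in> U d" for x y
      using that unfolding U_def by (auto intro: linear_congruence_root_unique[OF cop])
    moreover have "finite (U d)"
      unfolding U_def by simp
    ultimately show ?thesis
      using card_le_Suc0_iff_eq[of "U d"] by simp
  qed
  have finite_S: "finite S"
    using S finite_subset by blast
  have "{..<p^2} - allowed_residues b S p \<subseteq> {0} \<union> (\<Union>d\<in>S. U d)"
    unfolding allowed_residues_def U_def by (auto dest: dvd_imp_le)
  then have "card ({..<p^2} - allowed_residues b S p) \<le> card ({0} \<union> (\<Union>d\<in>S. U d))"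
    by (rule card_mono[rotated]) (simp add: U_def finite_S)
  also have "\<dots> \<le> 1 + card (\<Union>d\<in>S. U d)"
    using card_Un_le[of "{0}"] by simp
  also have "card (\<Union>d\<in>S. U d) \<le> (\<Sum>d\<in>S. card (U d))"
    using finite_S by (rule card_UN_le)
  also have "\<dots> \<le> card S"
    using sum_mono[of S "\<lambda>d. card (U d)" "\<lambda>_. 1"] U_le_1 by simp
  also have "\<dots> \<le> b"
    using card_mono[OF _ S] by simp
  finally show "card ({..<p^2} - allowed_residues b S p) \<le> b + 1"
    by simp
next
  fix p N :: nat
  assume p: "prime p" "b < p" and N: "1 \<le> N" "N mod p^2 \<notin> allowed_residues b S p"
  then have "p^2 dvd N \<or> (\<exists>d\<in>S. p^2 dvd b * N + d)"
    using prime_gt_0_nat[OF p(1)]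
    unfolding allowed_residues_def by (auto simp: dvd_mult_mod_add_iff dvd_mod_iff)
  then show "p^2 \<le> b * N + b"
  proof
    assume "p^2 dvd N"
    then have "p^2 \<le> N"
      using N by (simp add: dvd_imp_le)
    also have "N \<le> b * N"
      using b by simp
    finally show ?thesis
      by simp
  next
    assume "\<exists>d\<in>S. p^2 dvd b * N + d"
    then obtain d where d: "d \<in> S" "p^2 dvd b * N + d"
      by blast
    then have "p^2 \<le> b * N + d"
      using N b by (intro dvd_imp_le) auto
    then show ?thesis
      using d S by auto
  qed
qed

context
  fixes b :: nat and S :: "nat set"
  assumes b: "2 \<le> b" and S: "S \<subseteq> {..<b}"
begin

interpretation square_residue_sieve "allowed_residues b S" "b + 1" b b b
  using b S by (rule square_residue_sieve_allowed_residues)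

lemma density_allowed_residues: "density = dead_factor b S"
proof
  fix p
  show "density p = dead_factor b S p"
  proof (cases "prime p")
    case True
    define E where "E = {n \<in> {..<p^2}. p^2 dvd n \<or> (\<exists>d\<in>S. p^2 dvd b * n + d)}"
    have "allowed_residues b S p = {..<p^2} - E"
      unfolding allowed_residues_def E_def by auto
    moreover have "E \<subseteq> {..<p^2}"
      unfolding E_def by auto
    ultimately have "card (allowed_residues b S p) = p^2 - nu p b S"
      unfolding nu_def E_def[symmetric] by (simp add: card_Diff_subset finite_subset)
    moreover have "nu p b S \<le> card {..<p^2}"
      unfolding nu_def by (rule card_mono) auto
    moreover have "0 < real p ^ 2"
      using True prime_gt_0_nat by simp
    ultimately show ?thesis
      using True by (simp add: density_def dead_factor_def of_nat_diff field_simps)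
  qed (simp add: density_def dead_factor_def)
qed

lemma sifted_allowed_residues_iff:
  assumes "1 \<le> N"
  shows "sifted N \<longleftrightarrow> squarefree N \<and> (\<forall>d\<in>S. squarefree (b * N + d))"
proof -
  have nonzero: "N \<noteq> 0" "b * N + d \<noteq> 0" for d
    using assms b by auto
  have "sifted N \<longleftrightarrow> (\<forall>p. prime p \<longrightarrow> \<not> p^2 dvd N \<and> (\<forall>d\<in>S. \<not> p^2 dvd b * N + d))"
    unfolding sifted_def allowed_residues_def using prime_gt_0_nat
    by (auto simp: dvd_mult_mod_add_iff dvd_mod_iff)
  also have "\<dots> \<longleftrightarrow> squarefree N \<and> (\<forall>d\<in>S. squarefree (b * N + d))"
    using nonzero by (auto simp: squarefree_factorial_semiring)
  finally show ?thesis .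
qed

lemma squarefree_count_asymptotic:
  shows "convergent_prod (dead_factor b S)"
    and "\<exists>C. \<forall>X. 3 \<le> X \<longrightarrow>
      \<bar>real (squarefree_count b S X) - prodinf (dead_factor b S) * X\<bar> \<le> C * (X / sqrt (ln X))"
proof -
  have "sifted_count X = squarefree_count b S X" for X
    unfolding sifted_count_def squarefree_count_def
    by (rule arg_cong[where f = card]) (auto simp: sifted_allowed_residues_iff)
  then show "convergent_prod (dead_factor b S)"
    and "\<exists>C. \<forall>X. 3 \<le> X \<longrightarrow>
      \<bar>real (squarefree_count b S X) - prodinf (dead_factor b S) * X\<bar> \<le> C * (X / sqrt (ln X))"
    using convergent_prod_density sifted_count_asymptotic
    by (simp_all add: density_allowed_residues)
qed

end

lemma prod_one_minus_eq_sum_Pow: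
  fixes a :: "'a \<Rightarrow> 'b::comm_ring_1"
  assumes "finite A"
  shows "(\<Prod>d\<in>A. 1 - a d) = (\<Sum>S\<in>Pow A. (-1) ^ card S * (\<Prod>d\<in>S. a d))"
proof -
  have "(\<Prod>d\<in>A. 1 - a d) = (\<Prod>d\<in>A. - a d + 1)"
    by simp
  also have "\<dots> = (\<Sum>S\<in>Pow A. (\<Prod>d\<in>S. - a d) * (\<Prod>d\<in>A - S. 1))"
    using assms by (rule prod_add)
  also have "\<dots> = (\<Sum>S\<in>Pow A. (-1) ^ card S * (\<Prod>d\<in>S. a d))"
  proof (rule sum.cong[OF refl])
    fix S
    show "(\<Prod>d\<in>S. - a d) * (\<Prod>d\<in>A - S. 1) = (-1) ^ card S * (\<Prod>d\<in>S. a d)"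
      using prod.distrib[of "\<lambda>_. -1" a S] by simp
  qed
  finally show ?thesis .
qed

lemma prod_of_bool:
  assumes "finite A"
  shows "(\<Prod>x\<in>A. of_bool (P x) :: 'a::comm_semiring_1) = of_bool (\<forall>x\<in>A. P x)"
  using assms by (induction A rule: finite_induct) auto

lemma of_bool_dead_end_eq:
  "(of_bool (dead_end b N) :: real)
     = (\<Sum>S\<in>Pow {..<b}. (-1) ^ card S * of_bool (squarefree N \<and> (\<forall>d\<in>S. squarefree (b * N + d))))"
proof -
  have "(of_bool (dead_end b N) :: real)
      = of_bool (squarefree N) * (\<Prod>d<b. of_bool (\<not> squarefree (b * N + d)))"
    by (simp add: dead_end_def prod_of_bool of_bool_conj Ball_def lessThan_iff)
  also have "\<dots> = (\<Sum>S\<in>Pow {..<b}.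
      (-1) ^ card S * (of_bool (squarefree N) * (\<Prod>d\<in>S. of_bool (squarefree (b * N + d)))))"
    by (simp add: of_bool_not_iff prod_one_minus_eq_sum_Pow sum_distrib_left mult.left_commute)
  also have "\<dots> = (\<Sum>S\<in>Pow {..<b}.
      (-1) ^ card S * of_bool (squarefree N \<and> (\<forall>d\<in>S. squarefree (b * N + d))))"
  proof (rule sum.cong[OF refl])
    fix S
    assume "S \<in> Pow {..<b}"
    then have "finite S"
      by (auto intro: finite_subset)
    then show "(-1) ^ card S * (of_bool (squarefree N) * (\<Prod>d\<in>S. of_bool (squarefree (b * N + d))))
        = (-1) ^ card S * (of_bool (squarefree N \<and> (\<forall>d\<in>S. squarefree (b * N + d))) :: real)"
      by (simp add: prod_of_bool of_bool_conj)
  qed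
  finally show ?thesis .
qed

lemma D_count_eq_alternating_sum:
  "real (D_count b X) = (\<Sum>S\<in>Pow {..<b}. (-1) ^ card S * real (squarefree_count b S X))"
proof -
  define A where "A = {N. 1 \<le> N \<and> real N \<le> X}"
  have "A \<subseteq> {..nat \<lfloor>X\<rfloor>}"
    unfolding A_def by (auto intro: le_nat_floor)
  then have finite_A: "finite A"
    by (rule finite_subset) simp
  have card_eq_sum: "real (card {N. 1 \<le> N \<and> real N \<le> X \<and> P N}) = (\<Sum>N\<in>A. of_bool (P N))" for P
  proof -
    have "{N. 1 \<le> N \<and> real N \<le> X \<and> P N} = A \<inter> {N. P N}"
      unfolding A_def by auto
    then show ?thesis
      using finite_A by simp
  qed
  have "real (D_count b X) = (\<Sum>N\<in>A. of_bool (dead_end b N))"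
    unfolding D_count_def by (rule card_eq_sum)
  also have "\<dots> = (\<Sum>S\<in>Pow {..<b}.
      (-1) ^ card S * (\<Sum>N\<in>A. of_bool (squarefree N \<and> (\<forall>d\<in>S. squarefree (b * N + d)))))"
    unfolding of_bool_dead_end_eq by (subst sum.swap) (simp add: sum_distrib_left)
  also have "\<dots> = (\<Sum>S\<in>Pow {..<b}. (-1) ^ card S * real (squarefree_count b S X))"
    unfolding squarefree_count_def card_eq_sum ..
  finally show ?thesis .
qed

lemma D_count_asymptotic:
  assumes "2 \<le> b"
  shows "\<exists>C. \<forall>X. 3 \<le> X \<longrightarrow> \<bar>real (D_count b X) - c_dead b * X\<bar> \<le> C * (X / sqrt (ln X))"
proof -
  obtain C where C: "\<And>S X. S \<in> Pow {..<b} \<Longrightarrow> 3 \<le> X \<Longrightarrow>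
      \<bar>real (squarefree_count b S X) - prodinf (dead_factor b S) * X\<bar> \<le> C S * (X / sqrt (ln X))"
    using squarefree_count_asymptotic(2)[OF assms] by (metis PowD)
  have "\<bar>real (D_count b X) - c_dead b * X\<bar> \<le> (\<Sum>S\<in>Pow {..<b}. C S) * (X / sqrt (ln X))"
    if X: "3 \<le> X" for X
  proof -
    have "\<bar>real (D_count b X) - c_dead b * X\<bar>
        = \<bar>\<Sum>S\<in>Pow {..<b}. (-1) ^ card S * (real (squarefree_count b S X) - prodinf (dead_factor b S) * X)\<bar>"
      unfolding D_count_eq_alternating_sum c_dead_def
      by (simp add: sum_distrib_right sum_subtractf right_diff_distrib mult.assoc)
    also have "\<dots> \<le> (\<Sum>S\<in>Pow {..<b}. \<bar>real (squarefree_count b S X) - prodinf (dead_factor b S) * X\<bar>)"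
      by (rule order_trans[OF sum_abs]) (simp add: abs_mult)
    also have "\<dots> \<le> (\<Sum>S\<in>Pow {..<b}. C S * (X / sqrt (ln X)))"
      using C X by (intro sum_mono) auto
    finally show ?thesis
      by (simp only: sum_distrib_right)
  qed
  then show ?thesis
    by blast
qed

section \<open>Dead ends have positive density\<close>

definition class_residues :: "nat set \<Rightarrow> (nat \<Rightarrow> nat) \<Rightarrow> nat \<Rightarrow> nat set" where
  "class_residues T a p = (if p \<in> T then {a p} else {n \<in> {..<p^2}. n \<noteq> 0})"

context
  fixes T :: "nat set" and a :: "nat \<Rightarrow> nat"
  assumes T: "finite T" and a: "\<And>p. p \<in> T \<Longrightarrow> prime p \<and> 0 < a p \<and> a p < p^2"
begin

lemma square_residue_sieve_class_residues:
  "square_residue_sieve (class_residues T a) 1 (Max (insert 0 T)) 1 0"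
proof
  fix p :: nat
  assume "prime p"
  show "class_residues T a p \<subseteq> {..<p^2}"
    using a[of p] by (auto simp: class_residues_def)
next
  fix p :: nat
  assume "Max (insert 0 T) < p"
  then have "p \<notin> T"
    using T Max_ge[of "insert 0 T" p] by auto
  then have "{..<p^2} - class_residues T a p \<subseteq> {0}"
    by (auto simp: class_residues_def)
  then show "card ({..<p^2} - class_residues T a p) \<le> 1"
    using card_mono[of "{0::nat}"] by fastforce
next
  fix p N :: nat
  assume "Max (insert 0 T) < p" "1 \<le> N" "N mod p^2 \<notin> class_residues T a p"
  then have "p^2 dvd N" "1 \<le> N"
    using T Max_ge[of "insert 0 T" p] prime_gt_0_nat
    by (auto simp: class_residues_def dvd_eq_mod_eq_0 split: if_splits)
  then show "p^2 \<le> 1 * N + 0"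
    by (simp add: dvd_imp_le)
qed

interpretation square_residue_sieve "class_residues T a" 1 "Max (insert 0 T)" 1 0
  by (rule square_residue_sieve_class_residues)

lemma sifted_class_residues_imp:
  assumes "sifted N"
  shows "squarefree N" "\<And>p. p \<in> T \<Longrightarrow> N mod p^2 = a p"
proof -
  have mod_ne_0: "N mod p^2 \<noteq> 0" if "prime p" for p
    using assms a[of p] that unfolding sifted_def class_residues_def by (auto split: if_splits)
  then have "N \<noteq> 0"
    using two_is_prime_nat by fastforce
  then show "squarefree N"
    using mod_ne_0 by (auto simp: squarefree_factorial_semiring dvd_eq_mod_eq_0)
  show "N mod p^2 = a p" if "p \<in> T" for p
    using assms a[OF that] that unfolding sifted_def class_residues_def by auto
qed

lemma squarefree_in_residue_classes_lower_bound:
  assumes "\<And>N. squarefree N \<Longrightarrow> (\<forall>p\<in>T. N mod p^2 = a p) \<Longrightarrow> Q N"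
  shows "\<exists>P>0. \<exists>C. \<forall>X. 3 \<le> X \<longrightarrow>
    P * X - C * (X / sqrt (ln X)) \<le> real (card {N. 1 \<le> N \<and> real N \<le> X \<and> Q N})"
proof -
  have "class_residues T a p \<noteq> {}" if "prime p" for p
  proof (cases "p \<in> T")
    case False
    have "1 < p^2"
      using prime_gt_1_nat[OF that] by (intro one_less_power) auto
    then have "1 \<in> class_residues T a p"
      using False by (simp add: class_residues_def)
    then show ?thesis
      by blast
  qed (simp add: class_residues_def)
  then have "0 < prodinf density"
    by (rule prodinf_density_pos)
  have count_le: "real (sifted_count X) \<le> real (card {N. 1 \<le> N \<and> real N \<le> X \<and> Q N})" for X
  proof -
    have "finite {N. 1 \<le> N \<and> real N \<le> X \<and> Q N}"
      by (rule finite_subset[of _ "{..nat \<lfloor>X\<rfloor>}"]) (auto intro: le_nat_floor)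
    moreover have "{N. 1 \<le> N \<and> real N \<le> X \<and> sifted N} \<subseteq> {N. 1 \<le> N \<and> real N \<le> X \<and> Q N}"
      using assms sifted_class_residues_imp by auto
    ultimately show ?thesis
      unfolding sifted_count_def by (simp add: card_mono)
  qed
  obtain C where C: "\<And>X. 3 \<le> X \<Longrightarrow>
      \<bar>real (sifted_count X) - prodinf density * X\<bar> \<le> C * (X / sqrt (ln X))"
    using sifted_count_asymptotic by blast
  have "prodinf density * X - C * (X / sqrt (ln X)) \<le> real (card {N. 1 \<le> N \<and> real N \<le> X \<and> Q N})"
    if "3 \<le> X" for X
    using C[OF that] count_le[of X] unfolding abs_le_iff by linarith
  with \<open>0 < prodinf density\<close> show ?thesis
    by blast
qed

end

lemma inj_primes_greater:
  fixes n :: nat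
  obtains q :: "nat \<Rightarrow> nat" where "inj q" "\<forall>d. prime (q d) \<and> n < q d"
proof -
  have "{p. prime p \<and> n < p} = {p. prime p} - {..n}"
    by auto
  then have P: "infinite {p. prime p \<and> n < p}"
    using primes_infinite by simp
  show ?thesis
    by (rule that[of "enumerate {p. prime p \<and> n < p}"])
      (use inj_enumerate[OF P] enumerate_in_set[OF P] in auto)
qed

lemma linear_congruence_nonzero_root:
  fixes p b d :: nat
  assumes "prime p" "0 < d" "d < b" "b < p"
  obtains r where "0 < r" "r < p^2" "p^2 dvd b * r + d"
proof -
  have "coprime b (p^2)"
    using assms by (intro coprime_prime_power_if_less) auto
  then obtain r where r: "r < p^2" "p^2 dvd b * r + d"
    using linear_congruence_root_exists[of b "p^2" d] prime_gt_0_nat[OF assms(1)] by auto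
  have "r \<noteq> 0"
  proof
    assume "r = 0"
    then have "p^2 \<le> d"
      using r(2) assms(2) by (simp add: dvd_imp_le)
    moreover have "b < p^2"
      using assms(4) by (simp add: power2_eq_square less_le_trans[OF _ le_square])
    ultimately show False
      using assms(3) by simp
  qed
  then show ?thesis
    using r that by simp
qed

lemma not_squarefree_if_mod_root:
  fixes p b d N r :: nat
  assumes "prime p" "p^2 dvd b * r + d" "N mod p^2 = r"
  shows "\<not> squarefree (b * N + d)"
proof -
  have "p^2 dvd b * N + d"
    using assms(2) unfolding assms(3)[symmetric] dvd_mult_mod_add_iff .
  then show ?thesis
    using assms(1) by (intro not_squarefreeI) auto
qed

lemma dead_end_residue_classes:
  assumes b: "2 \<le> b"
  obtains T :: "nat set" and a :: "nat \<Rightarrow> nat"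
  where "finite T" "\<And>p. p \<in> T \<Longrightarrow> prime p \<and> 0 < a p \<and> a p < p^2"
    and "\<And>N. squarefree N \<Longrightarrow> (\<forall>p\<in>T. N mod p^2 = a p) \<Longrightarrow> dead_end b N"
proof -
  obtain q0 where q0: "prime q0" "q0 dvd b"
    using prime_factor_nat[of b] b by auto
  obtain q :: "nat \<Rightarrow> nat" where "inj q" "\<forall>d. prime (q d) \<and> b < q d"
    by (rule inj_primes_greater)
  then have q: "inj q" "prime (q d)" "b < q d" for d
    by auto
  have "\<forall>d\<in>{1..<b}. \<exists>r. 0 < r \<and> r < q d ^ 2 \<and> q d ^ 2 dvd b * r + d"
  proof
    fix d
    assume "d \<in> {1..<b}"
    then have "0 < d" "d < b"
      by auto
    then obtain r where "0 < r" "r < q d ^ 2" "q d ^ 2 dvd b * r + d"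
      using linear_congruence_nonzero_root[OF q(2) _ _ q(3)] by blast
    then show "\<exists>r. 0 < r \<and> r < q d ^ 2 \<and> q d ^ 2 dvd b * r + d"
      by blast
  qed
  then obtain r where r: "\<forall>d\<in>{1..<b}. 0 < r d \<and> r d < q d ^ 2 \<and> q d ^ 2 dvd b * r d + d"
    by (rule bchoice[THEN exE])
  define a where "a p = (if p = q0 then q0 else r (the_inv q p))" for p
  have a_q: "a (q d) = r d" for d
    using q(3)[of d] dvd_imp_le[OF q0(2)] b the_inv_f_f[OF q(1)] by (auto simp: a_def)
  show ?thesis
  proof
    show "finite (insert q0 (q ` {1..<b}))"
      by simp
  next
    fix p
    assume "p \<in> insert q0 (q ` {1..<b})"
    then consider "p = q0" | d where "d \<in> {1..<b}" "p = q d"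
      by blast
    then show "prime p \<and> 0 < a p \<and> a p < p^2"
    proof cases
      case 1
      then show ?thesis
        using q0(1) prime_gt_1_nat[OF q0(1)] by (simp add: a_def power2_eq_square)
    next
      case (2 d)
      then show ?thesis
        using q(2)[of d] r a_q by simp
    qed
  next
    fix N
    assume N: "squarefree N" "\<forall>p\<in>insert q0 (q ` {1..<b}). N mod p^2 = a p"
    have "\<not> squarefree (b * N + d)" if "d < b" for d
    proof (cases "d = 0")
      case True
      have "q0^2 dvd b * q0 + d"
        using q0(2) True by (simp add: power2_eq_square mult_dvd_mono)
      then show ?thesis
        using N(2) q0(1) by (intro not_squarefree_if_mod_root) (auto simp: a_def)
    next
      case False
      then show ?thesis
        using N(2) that q(2) r a_q by (intro not_squarefree_if_mod_root[of "q d" b "r d"]) auto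
    qed
    then show "dead_end b N"
      using N(1) by (simp add: dead_end_def)
  qed
qed

lemma dead_end_lower_bound:
  assumes "2 \<le> b"
  shows "\<exists>P>0. \<exists>C. \<forall>X. 3 \<le> X \<longrightarrow> P * X - C * (X / sqrt (ln X)) \<le> real (D_count b X)"
proof -
  obtain T a where "finite T" "\<And>p. p \<in> T \<Longrightarrow> prime p \<and> 0 < a p \<and> a p < p^2"
    and "\<And>N. squarefree N \<Longrightarrow> (\<forall>p\<in>T. N mod p^2 = a p) \<Longrightarrow> dead_end b N"
    using dead_end_residue_classes[OF assms] by blast
  then show ?thesis
    unfolding D_count_def by (rule squarefree_in_residue_classes_lower_bound)
qed

lemma c_dead_pos:
  assumes "2 \<le> b"
  shows "0 < c_dead b"
proof -
  obtain P C' where "0 < P"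
    and lower: "\<And>X. 3 \<le> X \<Longrightarrow> P * X - C' * (X / sqrt (ln X)) \<le> real (D_count b X)"
    using dead_end_lower_bound[OF assms] by blast
  obtain C
    where upper: "\<And>X. 3 \<le> X \<Longrightarrow> \<bar>real (D_count b X) - c_dead b * X\<bar> \<le> C * (X / sqrt (ln X))"
    using D_count_asymptotic[OF assms] by blast
  have "P \<le> c_dead b"
    using upper lower by (rule le_if_asymptotic_upper_and_lower_bound)
  with \<open>0 < P\<close> show ?thesis
    by simp
qed

theorem theorem1p2:
  fixes b :: nat
  assumes "b \<ge> 2"
  shows "(\<forall>S \<subseteq> {..<b}. convergent_prod (dead_factor b S))
    \<and> c_dead b > 0
    \<and> (\<exists>C. \<forall>X::real. X \<ge> 3 \<longrightarrow>
          \<bar>real (D_count b X) - c_dead b * X\<bar> \<le> C * (X / sqrt (ln X)))"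
  using squarefree_count_asymptotic(1)[OF assms] c_dead_pos[OF assms] D_count_asymptotic[OF assms]
  by blast

end
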